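(* For all $n\ge1$, $|\mathbf{I}_n(000)|=\dfrac{(n+1)!-d_{n+1}}{n}$, where $d_m$ is the number of derangements (fixed-point-free permutations) of $[m]$.
   Context: An inversion sequence of length $n$ is an integer sequence $e=e_1\dots e_n$ with $0\le e_i<i$ for all $i$; $\mathbf{I}_n$ denotes the set of these. $\mathbf{I}_n(000)$ is the set of $e\in\mathbf{I}_n$ with no $i$ such that $e_i=e_{i+1}=e_{i+2}$ (i.e. avoiding the consecutive pattern $000$). *)

theory Defs
  imports Complex_Main "HOL-Combinatorics.Permutations"
begin

text \<open>Inversion sequences of length n, as lists e (0-indexed): the paper's e_i is e ! (i-1),
  so the condition 0 \<le> e_i < i becomes e ! i < i + 1.\<close>
definition inv_seqs :: "nat \<Rightarrow> nat list set" where
  "inv_seqs n = {e. length e = n \<and> (\<forall>i<n. e ! i < i + 1)}"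

definition inv_seqs_000 :: "nat \<Rightarrow> nat list set" where
  "inv_seqs_000 n = {e \<in> inv_seqs n.
     \<not> (\<exists>i. i + 2 < n \<and> e ! i = e ! (i + 1) \<and> e ! (i + 1) = e ! (i + 2))}"

definition num_derangements :: "nat \<Rightarrow> nat" where
  "num_derangements m = card {p. p permutes {1..m} \<and> (\<forall>x\<in>{1..m}. p x \<noteq> x)}"

end

theory Submission
  imports Defs
begin

text \<open>Appending a letter x \<le> n to a 000-avoiding inversion sequence of length n keeps it
  000-avoiding unless the sequence ends in two equal letters and x repeats them. Keeping track
  of the sequences that end in such a pair yields a(n+2) = (n+1) a(n+1) + n a(n) for n \<ge> 1.
  Together with the derangement recurrence d(m+2) = (m+1)(d(m+1) + d(m)) this shows that
  n a(n) + d(n+1) satisfies the recurrence of (n+1)!, and the initial values agree.\<close>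

definition derangements :: "'a set \<Rightarrow> ('a \<Rightarrow> 'a) set" where
  "derangements A = {p. p permutes A \<and> (\<forall>x\<in>A. p x \<noteq> x)}"

definition almost_derangements :: "'a set \<Rightarrow> 'a \<Rightarrow> ('a \<Rightarrow> 'a) set" where
  "almost_derangements A b = {q. q permutes A \<and> (\<forall>x\<in>A - {b}. q x \<noteq> x)}"

lemma finite_derangements: "finite A \<Longrightarrow> finite (derangements A)"
  unfolding derangements_def by (rule finite_subset[OF _ finite_permutations]) auto

lemma card_derangements:
  assumes "finite A"
  shows "card (derangements A) = num_derangements (card A)"
proof -
  from assms obtain f where "bij_betw f A {1..card A}"
    by (metis finite_same_card_bij card_atLeastAtMost diff_Suc_1 finite_atLeastAtMost)
  from bij_betw_derangements[OF this] show ?thesis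
    unfolding num_derangements_def derangements_def by (rule bij_betw_same_card)
qed

lemma almost_derangements_eq:
  assumes "b \<in> A"
  shows "almost_derangements A b = derangements (A - {b}) \<union> derangements A"
proof (intro equalityI subsetI)
  fix q assume q: "q \<in> almost_derangements A b"
  show "q \<in> derangements (A - {b}) \<union> derangements A"
  proof (cases "q b = b")
    case True
    with q have "q permutes A - {b}"
      by (auto simp: almost_derangements_def intro: permutes_superset)
    with q show ?thesis by (simp add: almost_derangements_def derangements_def)
  next
    case False
    with q show ?thesis by (auto simp: almost_derangements_def derangements_def)
  qed
qed (auto simp: almost_derangements_def derangements_def intro: permutes_subset)

lemma card_almost_derangements:
  assumes "finite A" "b \<in> A"
  shows "card (almost_derangements A b) = num_derangements (card A - 1) + num_derangements (card A)"
proof -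
  have "derangements (A - {b}) \<inter> derangements A = {}"
    using assms(2) by (auto simp: derangements_def permutes_not_in)
  with assms show ?thesis
    by (simp add: almost_derangements_eq card_Un_disjoint finite_derangements card_derangements)
qed

lemma transpose_comp_mem_derangements_insert:
  assumes "a \<notin> A" "b \<in> A" "q \<in> almost_derangements A b"
  shows "transpose a b \<circ> q \<in> derangements (insert a A)"
proof -
  have q: "q permutes A" "\<And>x. x \<in> A - {b} \<Longrightarrow> q x \<noteq> x"
    using assms(3) by (auto simp: almost_derangements_def)
  have "transpose a b \<circ> q permutes insert a A"
    using assms(2) by (intro permutes_compose[OF permutes_subset[OF q(1)] permutes_swap_id]) auto
  moreover have "(transpose a b \<circ> q) x \<noteq> x" if "x \<in> insert a A" for x
  proof (cases "x = a")
    case True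
    then show ?thesis using assms(1,2) q(1) by (auto simp: permutes_not_in)
  next
    case False
    then have "x \<in> A" "q x \<in> A" using that q(1) by (auto simp: permutes_in_image)
    then show ?thesis using q assms(1) by (cases "q x = b") (auto simp: transpose_def)
  qed
  ultimately show ?thesis by (simp add: derangements_def)
qed

lemma transpose_comp_mem_almost_derangements:
  assumes "a \<notin> A" "p \<in> derangements (insert a A)"
  shows "p a \<in> A" "transpose a (p a) \<circ> p \<in> almost_derangements A (p a)"
proof -
  have p: "p permutes insert a A" "\<And>x. x \<in> insert a A \<Longrightarrow> p x \<noteq> x"
    using assms(2) by (auto simp: derangements_def)
  show "p a \<in> A" using p by (metis insertE insertI1 permutes_in_image)
  have "(transpose a (p a) \<circ> p) x \<noteq> x" if "x \<in> A - {p a}" for x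
  proof
    assume fixed: "(transpose a (p a) \<circ> p) x = x"
    have "x \<noteq> a" using that assms(1) by auto
    then have "p x \<noteq> p a" using permutes_inj[OF p(1)] by (meson injD)
    then show False using fixed p(2)[of x] that by (auto simp: transpose_def split: if_splits)
  qed
  then show "transpose a (p a) \<circ> p \<in> almost_derangements A (p a)"
    using permutes_insert_lemma[OF p(1)] by (simp add: almost_derangements_def)
qed

text \<open>Composing with the transposition of a and p a removes a from its cycle; the result
  can fix p a (namely when p swaps a and p a) but no other point.\<close>

lemma bij_betw_derangements_insert:
  assumes "a \<notin> A"
  shows "bij_betw (\<lambda>p. (p a, transpose a (p a) \<circ> p))
           (derangements (insert a A)) (SIGMA b:A. almost_derangements A b)"
proof (rule bij_betw_byWitness[where f' = "\<lambda>(b, q). transpose a b \<circ> q"])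
  show "\<forall>p\<in>derangements (insert a A). (\<lambda>(b, q). transpose a b \<circ> q) (p a, transpose a (p a) \<circ> p) = p"
    by (simp add: fun_eq_iff)
  have fixes_a: "q a = a" if "q \<in> almost_derangements A b" for b q
    using that assms by (auto simp: almost_derangements_def intro: permutes_not_in)
  then show "\<forall>y\<in>SIGMA b:A. almost_derangements A b.
      (\<lambda>p. (p a, transpose a (p a) \<circ> p)) ((\<lambda>(b, q). transpose a b \<circ> q) y) = y"
    by (auto simp: fun_eq_iff fixes_a)
qed (use transpose_comp_mem_almost_derangements[OF assms] transpose_comp_mem_derangements_insert[OF assms] in auto)


lemma num_derangements_Suc_Suc:
  "num_derangements (Suc (Suc n)) = Suc n * (num_derangements (Suc n) + num_derangements n)"
proof -
  let ?A = "{1..Suc n}"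
  have "num_derangements (Suc (Suc n)) = card (derangements (insert (n + 2) ?A))"
    by (simp add: card_derangements)
  also have "\<dots> = card (SIGMA b:?A. almost_derangements ?A b)"
    by (rule bij_betw_same_card[OF bij_betw_derangements_insert]) simp
  also have "\<dots> = (\<Sum>b\<in>?A. card (almost_derangements ?A b))"
    by (rule card_SigmaI) (auto simp: almost_derangements_eq finite_derangements)
  also have "\<dots> = (\<Sum>b\<in>?A. num_derangements n + num_derangements (Suc n))"
    by (rule sum.cong) (simp_all add: card_almost_derangements)
  finally show ?thesis by simp
qed

definition has_triple :: "nat list \<Rightarrow> bool" where
  "has_triple e \<longleftrightarrow>
     (\<exists>i. i + 2 < length e \<and> e ! i = e ! (i + 1) \<and> e ! (i + 1) = e ! (i + 2))"

definition last_two_equal :: "nat list \<Rightarrow> bool" where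
  "last_two_equal e \<longleftrightarrow> 2 \<le> length e \<and> e ! (length e - 2) = e ! (length e - 1)"

lemma has_triple_snoc:
  "has_triple (e @ [x]) \<longleftrightarrow> has_triple e \<or> last_two_equal e \<and> x = e ! (length e - 1)"
proof
  assume "has_triple (e @ [x])"
  then obtain i where i: "i + 2 < Suc (length e)"
    "(e @ [x]) ! i = (e @ [x]) ! (i + 1)" "(e @ [x]) ! (i + 1) = (e @ [x]) ! (i + 2)"
    by (auto simp: has_triple_def)
  show "has_triple e \<or> last_two_equal e \<and> x = e ! (length e - 1)"
  proof (cases "i + 2 < length e")
    case True
    with i show ?thesis by (auto simp: has_triple_def nth_append)
  next
    case False
    with i have "length e = i + 2" by simp
    with i show ?thesis by (auto simp: last_two_equal_def nth_append)
  qed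
next
  assume "has_triple e \<or> last_two_equal e \<and> x = e ! (length e - 1)"
  then show "has_triple (e @ [x])"
  proof
    assume "has_triple e"
    then show ?thesis by (force simp: has_triple_def nth_append)
  next
    assume pair: "last_two_equal e \<and> x = e ! (length e - 1)"
    then obtain m where "length e = m + 2"
      by (metis last_two_equal_def add.commute le_Suc_ex)
    with pair show ?thesis
      unfolding has_triple_def last_two_equal_def by (intro exI[of _ m]) (auto simp: nth_append)
  qed
qed

lemma inv_seqs_000_eq: "inv_seqs_000 n = {e \<in> inv_seqs n. \<not> has_triple e}"
  by (auto simp: inv_seqs_000_def inv_seqs_def has_triple_def)

lemma length_inv_seqs_000: "e \<in> inv_seqs_000 n \<Longrightarrow> length e = n"
  by (simp add: inv_seqs_000_def inv_seqs_def)

lemma nth_inv_seqs_000_le: "e \<in> inv_seqs_000 n \<Longrightarrow> i < n \<Longrightarrow> e ! i \<le> i"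
  by (auto simp: inv_seqs_000_def inv_seqs_def)

lemma snoc_in_inv_seqs_iff:
  "length e = n \<Longrightarrow> e @ [x] \<in> inv_seqs (Suc n) \<longleftrightarrow> e \<in> inv_seqs n \<and> x \<le> n"
  by (auto simp: inv_seqs_def nth_append less_Suc_eq)

lemma snoc_in_inv_seqs_000_iff:
  assumes "length e = n"
  shows "e @ [x] \<in> inv_seqs_000 (Suc n) \<longleftrightarrow>
         e \<in> inv_seqs_000 n \<and> x \<le> n \<and> \<not> (last_two_equal e \<and> x = e ! (n - 1))"
  using assms by (auto simp: inv_seqs_000_eq snoc_in_inv_seqs_iff has_triple_snoc)

lemma inv_seqs_000_Suc:
  "inv_seqs_000 (Suc n) = (\<lambda>(e, x). e @ [x]) `
     (SIGMA e:inv_seqs_000 n. {x. x \<le> n \<and> \<not> (last_two_equal e \<and> x = e ! (n - 1))})"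
proof (intro equalityI subsetI)
  fix f assume f: "f \<in> inv_seqs_000 (Suc n)"
  then obtain e x where "f = e @ [x]" "length e = n"
    by (metis length_inv_seqs_000 length_Suc_conv_rev)
  with f show "f \<in> (\<lambda>(e, x). e @ [x]) `
     (SIGMA e:inv_seqs_000 n. {x. x \<le> n \<and> \<not> (last_two_equal e \<and> x = e ! (n - 1))})"
    using snoc_in_inv_seqs_000_iff by force
qed (auto simp: snoc_in_inv_seqs_000_iff length_inv_seqs_000)

lemma finite_inv_seqs_000: "finite (inv_seqs_000 n)"
proof (induction n)
  case 0
  have "inv_seqs_000 0 \<subseteq> {[]}" by (auto simp: inv_seqs_000_def inv_seqs_def)
  then show ?case by (rule finite_subset) simp
next
  case (Suc n)
  then show ?case unfolding inv_seqs_000_Suc by (intro finite_imageI finite_SigmaI) auto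
qed

definition ending_in_pair :: "nat \<Rightarrow> nat list set" where
  "ending_in_pair n = {e \<in> inv_seqs_000 n. last_two_equal e}"

lemma finite_ending_in_pair: "finite (ending_in_pair n)"
  unfolding ending_in_pair_def using finite_inv_seqs_000 by simp

lemma card_inv_seqs_000_Suc:
  "card (inv_seqs_000 (Suc n)) + card (ending_in_pair n) = Suc n * card (inv_seqs_000 n)"
proof -
  let ?S = "inv_seqs_000 n"
  let ?ext = "\<lambda>e. {x. x \<le> n \<and> \<not> (last_two_equal e \<and> x = e ! (n - 1))}"
  have card_ext: "card (?ext e) = Suc n - (if last_two_equal e then 1 else 0)" if "e \<in> ?S" for e
  proof (cases "last_two_equal e")
    case True
    then have "e ! (n - 1) \<le> n" "?ext e = {..n} - {e ! (n - 1)}"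
      using that nth_inv_seqs_000_le[OF that, of "n - 1"]
      by (auto simp: last_two_equal_def length_inv_seqs_000)
    with True show ?thesis by simp
  qed simp
  have "card (inv_seqs_000 (Suc n)) = (\<Sum>e\<in>?S. card (?ext e))"
    unfolding inv_seqs_000_Suc
    by (subst card_image) (auto intro: inj_onI simp: finite_inv_seqs_000)
  also have "\<dots> = (\<Sum>e\<in>?S. Suc n - (if last_two_equal e then 1 else 0))"
    by (rule sum.cong[OF refl card_ext])
  moreover have "card (ending_in_pair n) = (\<Sum>e\<in>?S. if last_two_equal e then 1 else 0)"
    by (simp add: ending_in_pair_def sum.If_cases finite_inv_seqs_000 Int_def)
  ultimately have "card (inv_seqs_000 (Suc n)) + card (ending_in_pair n) = (\<Sum>e\<in>?S. Suc n)"
    by (simp add: sum.distrib[symmetric])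
  then show ?thesis by simp
qed

lemma card_ending_in_pair_Suc:
  assumes "n \<ge> 1"
  shows "card (ending_in_pair (Suc n)) + card (ending_in_pair n) = card (inv_seqs_000 n)"
proof -
  let ?S = "inv_seqs_000 n"
  have "ending_in_pair (Suc n) = (\<lambda>(e, x). e @ [x]) ` (SIGMA e:?S - ending_in_pair n. {e ! (n - 1)})"
  proof (intro equalityI subsetI)
    fix f assume f: "f \<in> ending_in_pair (Suc n)"
    then obtain e x where fe: "f = e @ [x]" and len: "length e = n"
      by (metis ending_in_pair_def length_inv_seqs_000 length_Suc_conv_rev mem_Collect_eq)
    with f assms have "x = e ! (n - 1)"
      by (auto simp: ending_in_pair_def last_two_equal_def nth_append)
    with f fe len show "f \<in> (\<lambda>(e, x). e @ [x]) ` (SIGMA e:?S - ending_in_pair n. {e ! (n - 1)})"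
      by (force simp: ending_in_pair_def snoc_in_inv_seqs_000_iff)
  next
    fix f assume "f \<in> (\<lambda>(e, x). e @ [x]) ` (SIGMA e:?S - ending_in_pair n. {e ! (n - 1)})"
    then obtain e where fe: "f = e @ [e ! (n - 1)]" and e: "e \<in> ?S" "\<not> last_two_equal e"
      by (auto simp: ending_in_pair_def)
    moreover have "e ! (n - 1) \<le> n"
      using nth_inv_seqs_000_le[OF e(1), of "n - 1"] assms by simp
    ultimately show "f \<in> ending_in_pair (Suc n)"
      using assms length_inv_seqs_000[OF e(1)]
      by (auto simp: ending_in_pair_def snoc_in_inv_seqs_000_iff last_two_equal_def nth_append)
  qed
  then have "card (ending_in_pair (Suc n)) = card (?S - ending_in_pair n)"
    by (simp add: card_image inj_on_def finite_inv_seqs_000)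
  also have "\<dots> = card ?S - card (ending_in_pair n)"
    by (rule card_Diff_subset[OF finite_ending_in_pair]) (auto simp: ending_in_pair_def)
  finally show ?thesis
    using card_mono[OF finite_inv_seqs_000, of "ending_in_pair n" n]
    by (auto simp: ending_in_pair_def)
qed

lemma card_inv_seqs_000_rec:
  assumes "n \<ge> 1"
  shows "card (inv_seqs_000 (n + 2)) = (n + 1) * card (inv_seqs_000 (n + 1)) + n * card (inv_seqs_000 n)"
  using card_inv_seqs_000_Suc[of "Suc n"] card_inv_seqs_000_Suc[of n] card_ending_in_pair_Suc[OF assms]
  by (simp add: algebra_simps)

lemma card_inv_seqs_000_0: "card (inv_seqs_000 0) = 1"
proof -
  have "inv_seqs_000 0 = {[]}" by (auto simp: inv_seqs_000_def inv_seqs_def)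
  then show ?thesis by simp
qed

lemma ending_in_pair_0_1: "ending_in_pair 0 = {}" "ending_in_pair 1 = {}"
  by (auto simp: ending_in_pair_def last_two_equal_def dest: length_inv_seqs_000)

lemma card_inv_seqs_000_1_2: "card (inv_seqs_000 1) = 1" "card (inv_seqs_000 2) = 2"
  using card_inv_seqs_000_Suc[of 0] card_inv_seqs_000_Suc[of 1] ending_in_pair_0_1
  by (simp_all add: card_inv_seqs_000_0 numeral_2_eq_2)

lemma num_derangements_2_3: "num_derangements 2 = 1" "num_derangements 3 = 2"
proof -
  have "num_derangements 0 = 1" "num_derangements 1 = 0"
    by (simp_all add: num_derangements_def)
  then show "num_derangements 2 = 1" "num_derangements 3 = 2"
    using num_derangements_Suc_Suc[of 0] num_derangements_Suc_Suc[of 1]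
    by (simp_all add: numeral_2_eq_2 numeral_3_eq_3)
qed

lemma card_inv_seqs_000_derangements:
  "Suc n * card (inv_seqs_000 (Suc n)) + num_derangements (n + 2) = fact (n + 2)"
proof (induction n rule: induct_nat_012)
  case 0
  show ?case using card_inv_seqs_000_1_2 num_derangements_2_3 by (simp add: numeral_2_eq_2)
next
  case 1
  show ?case using card_inv_seqs_000_1_2 num_derangements_2_3 by (simp add: fact_numeral eval_nat_numeral)
next
  case (ge2 n)
  let ?a = "\<lambda>k. card (inv_seqs_000 k)" and ?d = num_derangements
  have "(n + 3) * ?a (n + 3) + ?d (n + 4)
      = (n + 3) * ((n + 2) * ?a (n + 2) + (n + 1) * ?a (n + 1)) + (n + 3) * (?d (n + 3) + ?d (n + 2))"
    using card_inv_seqs_000_rec[of "n + 1"] num_derangements_Suc_Suc[of "n + 2"]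
    by (simp add: eval_nat_numeral)
  also have "\<dots> = (n + 3) * (((n + 2) * ?a (n + 2) + ?d (n + 3)) + ((n + 1) * ?a (n + 1) + ?d (n + 2)))"
    by (simp add: algebra_simps)
  also have "\<dots> = (n + 3) * (fact (n + 3) + fact (n + 2))"
    using ge2 by (simp add: eval_nat_numeral)
  also have "\<dots> = fact (n + 4)"
    by (simp add: eval_nat_numeral algebra_simps)
  finally show ?case by (simp add: eval_nat_numeral)
qed

theorem mainTheorem9:
  fixes n :: nat
  assumes "n \<ge> 1"
  shows "real (card (inv_seqs_000 n))
           = (real (fact (n + 1)) - real (num_derangements (n + 1))) / real n"
proof -
  obtain m where n: "n = Suc m" using assms by (cases n) auto
  have "n * card (inv_seqs_000 n) + num_derangements (n + 1) = fact (n + 1)"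
    using card_inv_seqs_000_derangements[of m] n by simp
  then have "real n * real (card (inv_seqs_000 n)) = real (fact (n + 1)) - real (num_derangements (n + 1))"
    by (metis add_diff_cancel_right' of_nat_add of_nat_mult)
  with assms show ?thesis by (simp add: eq_divide_eq mult.commute del: of_nat_fact)
qed

end
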